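(* Let $c,d>0$, $l\in\mathbb{Z}_+$ and $m\in\{0,\dots,l\}$. Then $$\lim_{q\uparrow1}R_{l-m}\big(q^{-l}-\tfrac dc q^{-l};\tfrac cd,2l;q\big)=\frac{(m+1)_{l-m}}{(l+m+1)_{l-m}}\Big(1+\frac dc\Big)^{l-m}R^{(m,m)}_{l-m}\Big(\frac{c-d}{c+d}\Big).$$
   Context: $(a)_n=a(a+1)\cdots(a+n-1)$. $R^{(\alpha,\beta)}_n$ is the Jacobi polynomial of degree $n$ normalized by $R^{(\alpha,\beta)}_n(1)=1$. Dual $q$-Krawtchouk value: $R_j(q^{-l}-\tfrac dc q^{-l};\tfrac cd,2l;q)=\sum_{k=0}^{j}\frac{(q^{-j};q)_k(q^{-l};q)_k(-\frac dc q^{-l};q)_k}{(q^{-2l};q)_k(q;q)_k}q^k$ with $(a;q)_k=\prod_{i=0}^{k-1}(1-aq^i)$. *)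

theory Defs
  imports Complex_Main
begin

definition qpoch :: "real \<Rightarrow> real \<Rightarrow> nat \<Rightarrow> real" where
  "qpoch a q k = (\<Prod>i<k. 1 - a * q ^ i)"

text \<open>Dual q-Krawtchouk value R_j(q^{-l} - (d/c) q^{-l}; c/d, 2l; q), as given in the context.\<close>
definition dual_qKrawtchouk :: "nat \<Rightarrow> nat \<Rightarrow> real \<Rightarrow> real \<Rightarrow> real \<Rightarrow> real" where
  "dual_qKrawtchouk j l c d q =
     (\<Sum>k=0..j. qpoch (inverse (q ^ j)) q k * qpoch (inverse (q ^ l)) q k
                * qpoch (- (d / c) * inverse (q ^ l)) q k
                / (qpoch (inverse (q ^ (2 * l))) q k * qpoch q q k) * q ^ k)"

text \<open>Jacobi polynomial normalized by R_n(1) = 1: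
  R_n^{(a,b)}(x) = 2F1(-n, n+a+b+1; a+1; (1-x)/2).\<close>
definition jacobiR :: "real \<Rightarrow> real \<Rightarrow> nat \<Rightarrow> real \<Rightarrow> real" where
  "jacobiR a b n x =
     (\<Sum>k=0..n. pochhammer (- real n) k * pochhammer (real n + a + b + 1) k
                / (pochhammer (a + 1) k * fact k) * ((1 - x) / 2) ^ k)"

end

theory Submission
  imports Defs "HOL-Computational_Algebra.Polynomial"
begin

(* As q tends to 1 from below, (q^-N q^s; q)_k / (1 - q)^k tends to the Pochhammer symbol (s - N)_k,
   so the dual q-Krawtchouk sum with j = l - m tends to the terminating series
   2F1(-n, -l; -2l; z) with n = l - m and z = 1 + d/c.  Up to the common factor l!^2 / (2l)!,
   this series and the Jacobi side are the coefficients of x^l in (1 + x)^(l+m) (x + 1 - z)^n and in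
   its reciprocal polynomial (1 + x)^(l+m) (1 + (1 - z) x)^n; the polynomial has degree 2l, so
   reflection does not move its middle coefficient. *)

lemma tendsto_q_integer:
  "((\<lambda>q::real. (1 - inverse (q ^ N) * q ^ s) / (1 - q)) \<longlongrightarrow> real s - real N) (at_left 1)"
proof -
  have "((\<lambda>q::real. inverse (q ^ N) * q ^ s) has_real_derivative real s - real N) (at 1)"
    by (auto intro!: derivative_eq_intros simp: algebra_simps)
  then have "((\<lambda>q::real. (inverse (q ^ N) * q ^ s - 1) / (q - 1)) \<longlongrightarrow> real s - real N) (at 1)"
    by (simp add: has_field_derivative_iff)
  moreover have "(1 - x) / (1 - q) = (x - 1) / (q - 1)" for x q :: real
    by (metis minus_diff_eq minus_divide_divide)
  ultimately show ?thesis
    by (simp add: filterlim_at_split)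
qed

lemma tendsto_qpoch_div_power:
  "((\<lambda>q. qpoch (inverse (q ^ N) * q ^ s) q k / (1 - q) ^ k) \<longlongrightarrow> pochhammer (real s - real N) k)
     (at_left 1)"
proof -
  have "qpoch (inverse (q ^ N) * q ^ s) q k / (1 - q) ^ k
      = (\<Prod>i<k. (1 - inverse (q ^ N) * q ^ (s + i)) / (1 - q))" for q :: real
    by (simp add: qpoch_def prod_dividef power_add mult.assoc)
  moreover have "((\<lambda>q. \<Prod>i<k. (1 - inverse (q ^ N) * q ^ (s + i)) / (1 - q))
         \<longlongrightarrow> (\<Prod>i<k. real (s + i) - real N)) (at_left 1)"
    by (intro tendsto_prod tendsto_q_integer)
  ultimately show ?thesis
    by (simp add: pochhammer_prod lessThan_atLeast0 algebra_simps)
qed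

lemma tendsto_dual_qKrawtchouk_term:
  assumes "k \<le> 2 * l"
  shows "((\<lambda>q. qpoch (inverse (q ^ j)) q k * qpoch (inverse (q ^ l)) q k * qpoch (- x * inverse (q ^ l)) q k
                / (qpoch (inverse (q ^ (2 * l))) q k * qpoch q q k) * q ^ k)
         \<longlongrightarrow> pochhammer (- real j) k * pochhammer (- real l) k
              / (pochhammer (- real (2 * l)) k * fact k) * (1 + x) ^ k) (at_left 1)"
proof -
  define Q where "Q N s q = qpoch (inverse (q ^ N) * q ^ s) q k / (1 - q) ^ k" for N s :: nat and q :: real
  have Q_lim: "(Q N s \<longlongrightarrow> pochhammer (real s - real N) k) (at_left 1)" for N s
    unfolding Q_def by (rule tendsto_qpoch_div_power)
  have "((\<lambda>q. qpoch (- x * inverse (q ^ l)) q k) \<longlongrightarrow> (\<Prod>i<k. 1 - (- x * inverse (1 ^ l)) * 1 ^ i)) (at_left 1)"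
    unfolding qpoch_def by (intro tendsto_intros) auto
  then have C_lim: "((\<lambda>q. qpoch (- x * inverse (q ^ l)) q k) \<longlongrightarrow> (1 + x) ^ k) (at_left 1)"
    by simp
  have "pochhammer (- real (2 * l)) k \<noteq> 0"
    using assms pochhammer_of_nat_eq_0_iff[of "2 * l" k, where 'a=real] by simp
  then have "((\<lambda>q. Q j 0 q * Q l 0 q * qpoch (- x * inverse (q ^ l)) q k / (Q (2 * l) 0 q * Q 0 1 q) * q ^ k)
     \<longlongrightarrow> pochhammer (- real j) k * pochhammer (- real l) k * (1 + x) ^ k
              / (pochhammer (- real (2 * l)) k * pochhammer 1 k) * 1 ^ k) (at_left 1)"
    using Q_lim[of j 0] Q_lim[of l 0] Q_lim[of "2 * l" 0] Q_lim[of 0 1]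
    by (intro tendsto_intros C_lim) (auto simp: pochhammer_fact[symmetric])
  moreover have "\<forall>\<^sub>F q in at_left 1.
      Q j 0 q * Q l 0 q * qpoch (- x * inverse (q ^ l)) q k / (Q (2 * l) 0 q * Q 0 1 q) * q ^ k
    = qpoch (inverse (q ^ j)) q k * qpoch (inverse (q ^ l)) q k * qpoch (- x * inverse (q ^ l)) q k
      / (qpoch (inverse (q ^ (2 * l))) q k * qpoch q q k) * q ^ k"
    using eventually_at_left_real[OF zero_less_one]
    by eventually_elim (simp add: Q_def)
  ultimately show ?thesis
    by (simp add: tendsto_cong pochhammer_fact)
qed

(* Gauss's series 2F1(a, b; c; x) cut off after x^n; for a = -n it terminates there anyway. *)
definition hyp2F1_trunc :: "real \<Rightarrow> real \<Rightarrow> real \<Rightarrow> nat \<Rightarrow> real \<Rightarrow> real" where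
  "hyp2F1_trunc a b c n x =
     (\<Sum>k=0..n. pochhammer a k * pochhammer b k / (pochhammer c k * fact k) * x ^ k)"

lemma jacobiR_eq_hyp2F1_trunc:
  "jacobiR a b n x = hyp2F1_trunc (- real n) (real n + a + b + 1) (a + 1) n ((1 - x) / 2)"
  by (simp add: jacobiR_def hyp2F1_trunc_def)

lemma tendsto_dual_qKrawtchouk:
  assumes "j \<le> 2 * l"
  shows "((\<lambda>q. dual_qKrawtchouk j l c d q)
           \<longlongrightarrow> hyp2F1_trunc (- real j) (- real l) (- real (2 * l)) j (1 + d / c)) (at_left 1)"
  unfolding dual_qKrawtchouk_def hyp2F1_trunc_def
  using assms by (intro tendsto_sum tendsto_dual_qKrawtchouk_term) auto

lemma pochhammer_of_nat_plus_1:
  "pochhammer (of_nat a + 1 :: 'a::field_char_0) k = fact (a + k) / fact a"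
proof -
  have "fact (a + k) = (fact a * pochhammer (of_nat a + 1) k :: 'a)"
    by (simp add: pochhammer_fact pochhammer_product' add.commute)
  then show ?thesis
    by simp
qed

lemma pochhammer_minus_of_nat:
  "k \<le> N \<Longrightarrow> pochhammer (- of_nat N :: 'a::field_char_0) k = (-1) ^ k * fact N / fact (N - k)"
  using pochhammer_of_nat_plus_1[of "N - k" k, where 'a='a]
  by (simp add: pochhammer_minus)

lemma binomial_sum_reflection:
  fixes z :: real
  assumes "z \<noteq> 1" and l: "l = n + m"
  shows "(\<Sum>k\<le>n. real (n choose k) * real ((2 * l - k) choose l) * (- z) ^ k)
       = (\<Sum>i\<le>n. real (n choose i) * real ((l + m + i) choose l) * z ^ (n - i) * (1 - z) ^ i)"
proof -
  define p1 :: "real poly" where "p1 = [:1, 1:]"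
  define P where "P = p1 ^ (l + m) * [:1 - z, 1:] ^ n"
  have coeff_p1_power: "coeff (p1 ^ N) l = real (N choose l)" for N
    using coeff_linear_poly_power[of l N "1::real" 1] unfolding p1_def
    by (cases "l \<le> N") (simp_all add: coeff_eq_0 degree_power_eq)
  have "[:1 - z, 1:] ^ n = ([:- z:] + p1) ^ n"
    by (simp add: p1_def)
  also have "\<dots> = (\<Sum>k\<le>n. smult (real (n choose k) * (- z) ^ k) (p1 ^ (n - k)))"
    by (simp add: binomial_ring of_nat_poly poly_const_pow mult.commute)
  finally have expansion: "[:1 - z, 1:] ^ n = \<dots>" .
  have "P = (\<Sum>k\<le>n. smult (real (n choose k) * (- z) ^ k) (p1 ^ (2 * l - k)))"
    unfolding P_def expansion sum_distrib_left
  proof (intro sum.cong)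
    fix k assume "k \<in> {..n}"
    then have "2 * l - k = (l + m) + (n - k)"
      using l by auto
    then show "p1 ^ (l + m) * smult (real (n choose k) * (- z) ^ k) (p1 ^ (n - k))
             = smult (real (n choose k) * (- z) ^ k) (p1 ^ (2 * l - k))"
      by (simp add: power_add)
  qed simp
  then have coeff_P: "coeff P l = (\<Sum>k\<le>n. real (n choose k) * real ((2 * l - k) choose l) * (- z) ^ k)"
    by (simp add: coeff_sum coeff_p1_power mult_ac)
  have "reflect_poly p1 = p1" and "reflect_poly [:1 - z, 1:] = smult (1 - z) p1 + [:z:]"
    using assms by (simp_all add: p1_def reflect_poly_def)
  then have "reflect_poly P = p1 ^ (l + m) * (smult (1 - z) p1 + [:z:]) ^ n"
    by (simp add: P_def reflect_poly_mult reflect_poly_power)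
  also have "\<dots> = (\<Sum>i\<le>n. smult (real (n choose i) * z ^ (n - i) * (1 - z) ^ i) (p1 ^ (l + m + i)))"
    by (simp add: binomial_ring sum_distrib_left of_nat_poly poly_const_pow smult_power power_add mult_ac)
  finally have coeff_reflect_P: "coeff (reflect_poly P) l
      = (\<Sum>i\<le>n. real (n choose i) * real ((l + m + i) choose l) * z ^ (n - i) * (1 - z) ^ i)"
    by (simp add: coeff_sum coeff_p1_power mult_ac)
  have "degree P = 2 * l"
    by (simp add: P_def p1_def degree_mult_eq degree_power_eq l)
  then have "coeff (reflect_poly P) l = coeff P l"
    by (simp add: coeff_reflect_poly)
  then show ?thesis
    using coeff_P coeff_reflect_P by simp
qed

lemma hyp2F1_trunc_minus_l_minus_2l_eq_sum:
  fixes z :: real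
  assumes "n \<le> l"
  shows "hyp2F1_trunc (- real n) (- real l) (- real (2 * l)) n z
       = fact l ^ 2 / fact (2 * l) * (\<Sum>k\<le>n. real (n choose k) * real ((2 * l - k) choose l) * (- z) ^ k)"
proof -
  have "pochhammer (- real n) k * pochhammer (- real l) k / (pochhammer (- real (2 * l)) k * fact k) * z ^ k
      = fact l ^ 2 / fact (2 * l) * (real (n choose k) * real ((2 * l - k) choose l) * (- z) ^ k)"
    if "k \<le> n" for k
  proof -
    have "k \<le> l" and "k \<le> 2 * l" and "l \<le> 2 * l - k" and "2 * l - k - l = l - k"
      using that assms by auto
    then have choose_l: "real ((2 * l - k) choose l) = fact (2 * l - k) / (fact l * fact (l - k))"
      using binomial_fact[of l "2 * l - k"] by simp
    have choose_n: "real (n choose k) = fact n / (fact k * fact (n - k))"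
      using that by (rule binomial_fact)
    show ?thesis
      unfolding choose_l choose_n power_minus[of z] pochhammer_minus_of_nat[OF that]
        pochhammer_minus_of_nat[OF \<open>k \<le> l\<close>] pochhammer_minus_of_nat[OF \<open>k \<le> 2 * l\<close>]
      by (simp add: field_simps power2_eq_square)
  qed
  then show ?thesis
    by (simp add: hyp2F1_trunc_def sum_distrib_left atLeast0AtMost)
qed

lemma hyp2F1_trunc_jacobi_eq_sum:
  fixes z :: real
  assumes "z \<noteq> 0" and l: "l = n + m"
  shows "pochhammer (real m + 1) n / pochhammer (real l + real m + 1) n * z ^ n
         * hyp2F1_trunc (- real n) (real n + 2 * real m + 1) (real m + 1) n ((z - 1) / z)
       = fact l ^ 2 / fact (2 * l)
         * (\<Sum>i\<le>n. real (n choose i) * real ((l + m + i) choose l) * z ^ (n - i) * (1 - z) ^ i)"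
proof -
  have sums: "real l + real m = real (l + m)" "real n + 2 * real m = real (l + m)"
      "l + m + n = 2 * l" "m + n = l"
    using l by simp_all
  have poch_n: "pochhammer (real l + real m + 1) n = fact (2 * l) / fact (l + m)"
      "pochhammer (real m + 1) n = fact l / fact m"
    using pochhammer_of_nat_plus_1[of "l + m" n] pochhammer_of_nat_plus_1[of m n] unfolding sums
    by simp_all
  have poch_i: "pochhammer (real n + 2 * real m + 1) i = fact (l + m + i) / fact (l + m)"
      "pochhammer (real m + 1) i = fact (m + i) / fact m" for i
    using pochhammer_of_nat_plus_1[of "l + m" i] pochhammer_of_nat_plus_1[of m i] unfolding sums
    by simp_all
  have "pochhammer (real m + 1) n / pochhammer (real l + real m + 1) n * z ^ n
      * (pochhammer (- real n) i * pochhammer (real n + 2 * real m + 1) i / (pochhammer (real m + 1) i * fact i)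
         * ((z - 1) / z) ^ i)
      = fact l ^ 2 / fact (2 * l) * (real (n choose i) * real ((l + m + i) choose l) * z ^ (n - i) * (1 - z) ^ i)"
    if "i \<le> n" for i
  proof -
    have choose_l: "real ((l + m + i) choose l) = fact (l + m + i) / (fact l * fact (m + i))"
      using binomial_fact[of l "l + m + i"] by simp
    have choose_n: "real (n choose i) = fact n / (fact i * fact (n - i))"
      using that by (rule binomial_fact)
    have z_power: "z ^ n = z ^ (n - i) * z ^ i"
      using that by (simp add: power_add[symmetric])
    have sign: "(1 - z) ^ i = (-1) ^ i * (z - 1) ^ i"
      by (simp add: power_minus[symmetric])
    show ?thesis
      unfolding poch_n
      unfolding choose_l choose_n poch_i pochhammer_minus_of_nat[OF that] z_power power_divide sign
      using \<open>z \<noteq> 0\<close> by (simp add: field_simps power2_eq_square)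
  qed
  then show ?thesis
    by (simp add: hyp2F1_trunc_def sum_distrib_left atLeast0AtMost)
qed

lemma hyp2F1_trunc_transform:
  fixes z :: real
  assumes "z \<noteq> 0" and "z \<noteq> 1" and l: "l = n + m"
  shows "hyp2F1_trunc (- real n) (- real l) (- real (2 * l)) n z
       = pochhammer (real m + 1) n / pochhammer (real l + real m + 1) n * z ^ n
         * hyp2F1_trunc (- real n) (real n + 2 * real m + 1) (real m + 1) n ((z - 1) / z)"
proof -
  have "n \<le> l"
    using l by simp
  show ?thesis
    unfolding hyp2F1_trunc_minus_l_minus_2l_eq_sum[OF \<open>n \<le> l\<close>]
      hyp2F1_trunc_jacobi_eq_sum[OF assms(1) l]
      binomial_sum_reflection[OF assms(2) l] ..
qed

theorem mainTheorem7:
  fixes c d :: real and l m :: nat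
  assumes "c > 0" and "d > 0" and "l > 0" and "m \<le> l"
  shows "((\<lambda>q. dual_qKrawtchouk (l - m) l c d q) \<longlongrightarrow>
           pochhammer (real m + 1) (l - m) / pochhammer (real l + real m + 1) (l - m)
           * (1 + d / c) ^ (l - m)
           * jacobiR (real m) (real m) (l - m) ((c - d) / (c + d))) (at_left 1)"
proof -
  define n where "n = l - m"
  define z where "z = 1 + d / c"
  have l: "l = n + m"
    using assms(4) by (simp add: n_def)
  have "z > 1"
    using assms(1,2) by (simp add: z_def)
  have "(1 - (c - d) / (c + d)) / 2 = (z - 1) / z"
    using assms(1,2) by (simp add: z_def field_simps)
  then have jacobi: "jacobiR (real m) (real m) n ((c - d) / (c + d))
      = hyp2F1_trunc (- real n) (real n + 2 * real m + 1) (real m + 1) n ((z - 1) / z)"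
    unfolding jacobiR_eq_hyp2F1_trunc by (simp only: mult_2 add.assoc)
  have "hyp2F1_trunc (- real n) (- real l) (- real (2 * l)) n z
      = pochhammer (real m + 1) n / pochhammer (real l + real m + 1) n * z ^ n
        * hyp2F1_trunc (- real n) (real n + 2 * real m + 1) (real m + 1) n ((z - 1) / z)"
    using \<open>z > 1\<close> l by (intro hyp2F1_trunc_transform) simp_all
  moreover have "((\<lambda>q. dual_qKrawtchouk n l c d q)
      \<longlongrightarrow> hyp2F1_trunc (- real n) (- real l) (- real (2 * l)) n z) (at_left 1)"
    unfolding z_def using l by (intro tendsto_dual_qKrawtchouk) simp
  ultimately show ?thesis
    unfolding n_def[symmetric] z_def[symmetric] jacobi by simp
qed

end
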